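(* Let $S$ be a multiplicatively closed subset of an $r$-lattice $L$ (with $1\in S$, $0\notin S$). Then $L$ is an $S$-Noetherian lattice if and only if every $S$-prime element of $L$ is $S$-compact.
   Context: A multiplicative lattice is a complete lattice $L$ with a commutative, associative multiplication $\cdot$ distributing over arbitrary joins, with $1$ as identity. Compact elements are defined as usual ($c\le\bigvee a_\alpha$ implies $c$ below a finite subjoin); $L_*$ denotes the set of compact elements. $(a:b)=\bigvee\{x\mid xb\le a\}$. An element $m$ is principal if it is meet principal ($a\wedge mb=m((a:m)\wedge b)$ for all $a,b$) and join principal ($a\vee(b:m)=(am\vee b):m$ for all $a,b$). An $r$-lattice is a modular, principally generated, compactly generated multiplicative lattice with $1$ compact. A multiplicatively closed subset is a nonempty $S\subseteq L_*$ closed under multiplication. An element $a$ is $S$-compact if there exist a compact $b$ and $s\in S$ with $s a\le b\le a$; $L$ is $S$-Noetherian if every element is $S$-compact. A proper element $p$ with $t\not\le p$ for all $t\in S$ is $S$-prime if there exists $s\in S$ such that for all $a,b\in L$, $a\cdot b\le p$ implies $s\cdot a\le p$ or $s\cdot b\le p$. *)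

theory Defs
  imports Main
begin

definition mult_lattice :: "('a::complete_lattice \<Rightarrow> 'a \<Rightarrow> 'a) \<Rightarrow> bool" where
  "mult_lattice m \<longleftrightarrow>
     (\<forall>a b. m a b = m b a) \<and>
     (\<forall>a b c. m (m a b) c = m a (m b c)) \<and>
     (\<forall>a A. m a (Sup A) = Sup ((\<lambda>x. m a x) ` A)) \<and>
     (\<forall>a. m top a = a)"

definition compact_el :: "'a::complete_lattice \<Rightarrow> bool" where
  "compact_el c \<longleftrightarrow> (\<forall>A. c \<le> Sup A \<longrightarrow> (\<exists>F. F \<subseteq> A \<and> finite F \<and> c \<le> Sup F))"

definition residual :: "('a::complete_lattice \<Rightarrow> 'a \<Rightarrow> 'a) \<Rightarrow> 'a \<Rightarrow> 'a \<Rightarrow> 'a" where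
  "residual m a b = Sup {x. m x b \<le> a}"

definition meet_principal :: "('a::complete_lattice \<Rightarrow> 'a \<Rightarrow> 'a) \<Rightarrow> 'a \<Rightarrow> bool" where
  "meet_principal m e \<longleftrightarrow> (\<forall>a b. inf a (m e b) = m e (inf (residual m a e) b))"

definition join_principal :: "('a::complete_lattice \<Rightarrow> 'a \<Rightarrow> 'a) \<Rightarrow> 'a \<Rightarrow> bool" where
  "join_principal m e \<longleftrightarrow> (\<forall>a b. sup a (residual m b e) = residual m (sup (m a e) b) e)"

definition principal_el :: "('a::complete_lattice \<Rightarrow> 'a \<Rightarrow> 'a) \<Rightarrow> 'a \<Rightarrow> bool" where
  "principal_el m e \<longleftrightarrow> meet_principal m e \<and> join_principal m e"

definition r_lattice :: "('a::complete_lattice \<Rightarrow> 'a \<Rightarrow> 'a) \<Rightarrow> bool" where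
  "r_lattice m \<longleftrightarrow> mult_lattice m \<and>
     (\<forall>a b c::'a. a \<le> c \<longrightarrow> sup a (inf b c) = inf (sup a b) c) \<and>
     (\<forall>a::'a. \<exists>P. (\<forall>x\<in>P. principal_el m x) \<and> a = Sup P) \<and>
     (\<forall>a::'a. \<exists>C. (\<forall>x\<in>C. compact_el x) \<and> a = Sup C) \<and>
     compact_el (top::'a)"

definition mult_closed :: "('a::complete_lattice \<Rightarrow> 'a \<Rightarrow> 'a) \<Rightarrow> 'a set \<Rightarrow> bool" where
  "mult_closed m S \<longleftrightarrow> S \<noteq> {} \<and> (\<forall>s\<in>S. compact_el s) \<and> (\<forall>s\<in>S. \<forall>t\<in>S. m s t \<in> S)"

definition S_compact :: "('a::complete_lattice \<Rightarrow> 'a \<Rightarrow> 'a) \<Rightarrow> 'a set \<Rightarrow> 'a \<Rightarrow> bool" where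
  "S_compact m S a \<longleftrightarrow> (\<exists>b s. compact_el b \<and> s \<in> S \<and> m s a \<le> b \<and> b \<le> a)"

definition S_noetherian :: "('a::complete_lattice \<Rightarrow> 'a \<Rightarrow> 'a) \<Rightarrow> 'a set \<Rightarrow> bool" where
  "S_noetherian m S \<longleftrightarrow> (\<forall>a. S_compact m S a)"

definition S_prime :: "('a::complete_lattice \<Rightarrow> 'a \<Rightarrow> 'a) \<Rightarrow> 'a set \<Rightarrow> 'a \<Rightarrow> bool" where
  "S_prime m S p \<longleftrightarrow> p \<noteq> top \<and> (\<forall>t\<in>S. \<not> t \<le> p) \<and>
     (\<exists>s\<in>S. \<forall>a b. m a b \<le> p \<longrightarrow> m s a \<le> p \<or> m s b \<le> p)"

end

theory Submission
  imports Defs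
begin

text \<open>Suppose some element is not S-compact. If the join of a chain is S-compact, its compact
  witness already lies below a member of the chain, so that member is S-compact too; hence Zorn's
  lemma yields a maximal element p that is not S-compact. Such a p is prime: if \<open>a b \<le> p\<close> with
  neither a nor b below p, pick a principal \<open>x \<le> a\<close> not below p. Then \<open>p \<squnion> x\<close> and \<open>(p : x) \<ge> b\<close>
  properly exceed p, so both are S-compact, and modularity together with \<open>p \<sqinter> x = x (p : x)\<close> glues
  their witnesses into one for p (a principal times a compact element is compact). A prime element
  is S-prime with \<open>s = 1\<close>, so the hypothesis makes p S-compact, a contradiction.\<close>

definition directed :: "'a::order set \<Rightarrow> bool" where
  "directed D \<longleftrightarrow> D \<noteq> {} \<and> (\<forall>x\<in>D. \<forall>y\<in>D. \<exists>z\<in>D. x \<le> z \<and> y \<le> z)"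

lemma directed_finite_upper_bound:
  assumes "directed D" "finite G" "G \<subseteq> D"
  shows "\<exists>d\<in>D. \<forall>g\<in>G. g \<le> d"
  using assms(2,3)
proof (induction G rule: finite_induct)
  case empty
  then show ?case using assms(1) unfolding directed_def by auto
next
  case (insert x G)
  then obtain d where "d \<in> D" "\<forall>g\<in>G. g \<le> d" by auto
  moreover obtain z where "z \<in> D" "x \<le> z" "d \<le> z"
    using assms(1) insert.prems \<open>d \<in> D\<close> unfolding directed_def by blast
  ultimately show ?case using order_trans by blast
qed

lemma directed_image_mono:
  assumes "mono f" "directed D"
  shows "directed (f ` D)"
  unfolding directed_def
proof (intro conjI ballI)
  show "f ` D \<noteq> {}" using assms(2) unfolding directed_def by simp
  fix u v assume "u \<in> f ` D" "v \<in> f ` D"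
  then obtain x y where "x \<in> D" "y \<in> D" "u = f x" "v = f y" by blast
  then obtain z where "z \<in> D" "x \<le> z" "y \<le> z" using assms(2) unfolding directed_def by blast
  then show "\<exists>w\<in>f ` D. u \<le> w \<and> v \<le> w"
    using \<open>u = f x\<close> \<open>v = f y\<close> assms(1) by (auto dest: monoD)
qed

lemma compact_el_directedD:
  assumes "compact_el c" "directed D" "c \<le> Sup D"
  shows "\<exists>d\<in>D. c \<le> d"
proof -
  obtain G where G: "G \<subseteq> D" "finite G" "c \<le> Sup G"
    using assms(1,3) unfolding compact_el_def by blast
  obtain d where "d \<in> D" "\<forall>g\<in>G. g \<le> d"
    using directed_finite_upper_bound[OF assms(2) G(2,1)] by blast
  then have "Sup G \<le> d" by (simp add: Sup_least)
  then show ?thesis using G(3) \<open>d \<in> D\<close> by (blast intro: order_trans)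
qed

lemma compact_el_directedI:
  assumes "\<And>D. directed D \<Longrightarrow> c \<le> Sup D \<Longrightarrow> \<exists>d\<in>D. c \<le> d"
  shows "compact_el c"
  unfolding compact_el_def
proof (intro allI impI)
  fix A assume "c \<le> Sup A"
  define D where "D = {Sup F | F. F \<subseteq> A \<and> finite F}"
  have "directed D"
    unfolding directed_def
  proof (intro conjI ballI)
    show "D \<noteq> {}" unfolding D_def by blast
    fix u v assume "u \<in> D" "v \<in> D"
    then obtain F1 F2 where "u = Sup F1" "v = Sup F2" "F1 \<subseteq> A" "F2 \<subseteq> A" "finite F1" "finite F2"
      unfolding D_def by blast
    then show "\<exists>z\<in>D. u \<le> z \<and> v \<le> z"
      unfolding D_def
      by (intro bexI[of _ "Sup (F1 \<union> F2)"]) (auto simp: Sup_union_distrib intro!: exI[of _ "F1 \<union> F2"])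
  qed
  moreover have "Sup A \<le> Sup D"
  proof (rule Sup_least)
    fix a assume "a \<in> A"
    then have "Sup {a} \<in> D" unfolding D_def by blast
    then show "a \<le> Sup D" using Sup_upper[of "Sup {a}" D] by simp
  qed
  ultimately obtain d where "d \<in> D" "c \<le> d"
    using assms order_trans[OF \<open>c \<le> Sup A\<close>] by blast
  then show "\<exists>F\<subseteq>A. finite F \<and> c \<le> Sup F" unfolding D_def by blast
qed

lemma compact_el_bot: "compact_el bot"
  unfolding compact_el_def by auto

lemma compact_el_sup:
  assumes "compact_el c" "compact_el d"
  shows "compact_el (sup c d)"
  unfolding compact_el_def
proof (intro allI impI)
  fix A assume "sup c d \<le> Sup A"
  then have "c \<le> Sup A" "d \<le> Sup A" by simp_all
  then obtain F1 F2 where "F1 \<subseteq> A" "finite F1" "c \<le> Sup F1" "F2 \<subseteq> A" "finite F2" "d \<le> Sup F2"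
    using assms unfolding compact_el_def by meson
  then show "\<exists>F\<subseteq>A. finite F \<and> sup c d \<le> Sup F"
    by (intro exI[of _ "F1 \<union> F2"]) (simp add: Sup_union_distrib le_supI1 le_supI2)
qed

lemma compact_el_Sup_finite:
  assumes "finite F" "\<forall>x\<in>F. compact_el x"
  shows "compact_el (Sup F)"
  using assms
proof (induction F rule: finite_induct)
  case empty
  then show ?case using compact_el_bot by simp
next
  case (insert x F)
  then show ?case unfolding Sup_insert by (simp add: compact_el_sup)
qed

lemma inf_Sup_directed:
  fixes x :: "'a::complete_lattice"
  assumes cg: "\<And>a::'a. \<exists>C. (\<forall>c\<in>C. compact_el c) \<and> a = Sup C"
    and "directed D"
  shows "inf x (Sup D) = Sup (inf x ` D)"
proof (rule antisym)
  obtain C where C: "\<forall>c\<in>C. compact_el c" "inf x (Sup D) = Sup C" using cg by blast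
  have "c \<le> Sup (inf x ` D)" if c_in: "c \<in> C" for c
  proof -
    have c_le: "c \<le> inf x (Sup D)" unfolding C(2) using c_in by (rule Sup_upper)
    moreover obtain d where "d \<in> D" "c \<le> d"
      using compact_el_directedD[OF _ \<open>directed D\<close>, of c] C(1) c_in c_le by auto
    ultimately have "c \<le> inf x d" by simp
    then show ?thesis using \<open>d \<in> D\<close> by (auto intro: Sup_upper2)
  qed
  then show "inf x (Sup D) \<le> Sup (inf x ` D)" unfolding C(2) by (rule Sup_least)
  show "Sup (inf x ` D) \<le> inf x (Sup D)" by (rule SUP_least) (simp add: Sup_upper le_infI2)
qed

lemma compact_le_sup_compact_below:
  fixes p :: "'a::complete_lattice"
  assumes cg: "\<And>a::'a. \<exists>C. (\<forall>c\<in>C. compact_el c) \<and> a = Sup C"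
    and "compact_el c" "c \<le> sup p x"
  shows "\<exists>p'. compact_el p' \<and> p' \<le> p \<and> c \<le> sup p' x"
proof -
  obtain K where K: "\<forall>k\<in>K. compact_el k" "p = Sup K" using cg by blast
  have "c \<le> Sup (insert x K)" using assms(3) K(2) by (simp add: sup_commute)
  then obtain G where G: "G \<subseteq> insert x K" "finite G" "c \<le> Sup G"
    using assms(2) unfolding compact_el_def by blast
  have "Sup G \<le> sup (Sup (G - {x})) x"
  proof (rule Sup_least)
    fix g assume "g \<in> G"
    then show "g \<le> sup (Sup (G - {x})) x"
      by (cases "g = x") (simp_all add: le_supI1 Sup_upper)
  qed
  moreover have "compact_el (Sup (G - {x}))" using G K(1) by (intro compact_el_Sup_finite) auto
  moreover have "Sup (G - {x}) \<le> p" unfolding K(2) using G(1) by (auto intro!: Sup_subset_mono)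
  ultimately show ?thesis using G(3) order_trans by blast
qed

lemma le_residualI: "m x e \<le> a \<Longrightarrow> x \<le> residual m a e"
  unfolding residual_def by (auto intro: Sup_upper)

lemma residual_mono: "a \<le> b \<Longrightarrow> residual m a e \<le> residual m b e"
  unfolding residual_def by (auto intro!: Sup_subset_mono)

context
  fixes m :: "'a::complete_lattice \<Rightarrow> 'a \<Rightarrow> 'a"
  assumes ml: "mult_lattice m"
begin

lemma mult_commute: "m a b = m b a"
  using ml unfolding mult_lattice_def by blast

lemma mult_assoc: "m (m a b) c = m a (m b c)"
  using ml unfolding mult_lattice_def by blast

lemma mult_Sup: "m a (Sup A) = Sup (m a ` A)"
  using ml unfolding mult_lattice_def by blast

lemma mult_top_left: "m top a = a"
  using ml unfolding mult_lattice_def by blast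

lemma mult_sup: "m c (sup a b) = sup (m c a) (m c b)"
  using mult_Sup[of c "{a, b}"] by simp

lemma mult_mono: "a \<le> b \<Longrightarrow> m c a \<le> m c b"
  by (metis mult_sup sup.absorb_iff2 sup.cobounded1)

lemma mult_mono_left: "a \<le> b \<Longrightarrow> m a c \<le> m b c"
  by (simp add: mult_commute[of _ c] mult_mono)

lemma mult_le_right_factor: "m s a \<le> a"
  using mult_mono_left[of s top a] by (simp add: mult_top_left)

lemma mult_le_left_factor: "m a s \<le> a"
  using mult_le_right_factor[of s a] by (simp add: mult_commute)

lemma mult_residual_le: "m e (residual m a e) \<le> a"
proof -
  have "m e (residual m a e) = Sup (m e ` {x. m x e \<le> a})"
    unfolding residual_def by (rule mult_Sup)
  also have "\<dots> \<le> a"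
    by (rule SUP_least) (simp add: mult_commute[of e])
  finally show ?thesis .
qed

lemma meet_principal_inf_eq: "meet_principal m x \<Longrightarrow> inf a x = m x (residual m a x)"
  unfolding meet_principal_def by (metis inf_top_right mult_commute mult_top_left)

lemma join_principal_residual_bot:
  "join_principal m x \<Longrightarrow> sup a (residual m bot x) = residual m (m a x) x"
  unfolding join_principal_def by (metis sup_bot_right)

lemma compact_el_mult_principal:
  assumes cg: "\<And>a::'a. \<exists>C. (\<forall>c\<in>C. compact_el c) \<and> a = Sup C"
    and "principal_el m x" "compact_el d"
  shows "compact_el (m x d)"
proof (rule compact_el_directedI)
  fix D assume D: "directed D" and xd: "m x d \<le> Sup D"
  have mp: "meet_principal m x" and jp: "join_principal m x"
    using \<open>principal_el m x\<close> unfolding principal_el_def by auto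
  define q where "q = Sup ((\<lambda>b. residual m b x) ` D)"
  txt \<open>Meet principality and meet continuity give \<open>x q = x (Sup D : x)\<close>; join principality
    then cancels the factor x up to \<open>(0 : x) \<le> q\<close>, so the compact d lies below the directed join q.\<close>
  have "m x q = Sup ((\<lambda>b. m x (residual m b x)) ` D)"
    unfolding q_def mult_Sup by (simp add: image_image)
  also have "\<dots> = Sup (inf x ` D)"
    using meet_principal_inf_eq[OF mp] by (simp add: inf_commute)
  also have "\<dots> = inf x (Sup D)"
    using inf_Sup_directed[OF cg D] by simp
  also have "\<dots> = m x (residual m (Sup D) x)"
    using meet_principal_inf_eq[OF mp, of "Sup D"] by (simp add: inf_commute)
  finally have xq: "m x q = m x (residual m (Sup D) x)" .
  obtain b0 where "b0 \<in> D" using D unfolding directed_def by blast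
  then have "residual m bot x \<le> q"
    unfolding q_def by (rule SUP_upper2) (simp add: residual_mono)
  then have "q = sup q (residual m bot x)" by (simp add: sup.absorb1)
  also have "\<dots> = residual m (m x (residual m (Sup D) x)) x"
    using join_principal_residual_bot[OF jp, of q] xq by (simp add: mult_commute)
  also have "\<dots> = sup (residual m (Sup D) x) (residual m bot x)"
    using join_principal_residual_bot[OF jp, of "residual m (Sup D) x"] by (simp add: mult_commute)
  finally have "residual m (Sup D) x \<le> q" by (metis sup.cobounded1)
  moreover have "d \<le> residual m (Sup D) x"
    using xd by (intro le_residualI) (simp add: mult_commute)
  ultimately have "d \<le> q" by simp
  moreover have "directed ((\<lambda>b. residual m b x) ` D)"
    using D by (intro directed_image_mono) (simp_all add: mono_def residual_mono)
  ultimately obtain b where "b \<in> D" "d \<le> residual m b x"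
    using compact_el_directedD[OF \<open>compact_el d\<close>] unfolding q_def by blast
  then have "m x d \<le> b"
    using mult_mono mult_residual_le order_trans by blast
  then show "\<exists>b\<in>D. m x d \<le> b" using \<open>b \<in> D\<close> by blast
qed

lemma S_compact_of_S_compact_sup_residual:
  assumes modular: "\<And>a b c::'a. a \<le> c \<Longrightarrow> sup a (inf b c) = inf (sup a b) c"
    and cg: "\<And>a::'a. \<exists>C. (\<forall>c\<in>C. compact_el c) \<and> a = Sup C"
    and "mult_closed m S" "principal_el m x"
    and "S_compact m S (sup p x)" "S_compact m S (residual m p x)"
  shows "S_compact m S p"
proof -
  define r where "r = residual m p x"
  obtain c s1 where c: "compact_el c" "s1 \<in> S" "m s1 (sup p x) \<le> c" "c \<le> sup p x"
    using \<open>S_compact m S (sup p x)\<close> unfolding S_compact_def by blast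
  obtain d s2 where d: "compact_el d" "s2 \<in> S" "m s2 r \<le> d" "d \<le> r"
    using \<open>S_compact m S (residual m p x)\<close> unfolding S_compact_def r_def by blast
  obtain p' where p': "compact_el p'" "p' \<le> p" "c \<le> sup p' x"
    using compact_le_sup_compact_below[OF cg c(1,4)] by blast
  have "m s1 p \<le> c"
    using mult_mono[of p "sup p x" s1] c(3) by simp
  then have "m s1 p \<le> inf (sup p' x) p"
    using p'(3) mult_le_right_factor by (simp add: order_trans)
  also have "\<dots> = sup p' (inf x p)"
    using modular[OF p'(2)] by simp
  also have "inf x p = m x r"
    using \<open>principal_el m x\<close> meet_principal_inf_eq[of x p] unfolding r_def principal_el_def
    by (metis inf_commute)
  finally have s1p: "m s1 p \<le> sup p' (m x r)" .
  have "m (m s2 s1) p = m s2 (m s1 p)" by (rule mult_assoc)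
  also have "\<dots> \<le> sup (m s2 p') (m s2 (m x r))"
    using mult_mono[OF s1p] by (simp add: mult_sup)
  also have "m s2 (m x r) = m x (m s2 r)"
    by (metis mult_assoc mult_commute)
  also have "sup (m s2 p') (m x (m s2 r)) \<le> sup p' (m x d)"
    using mult_le_right_factor mult_mono[OF d(3)] by (rule sup_mono)
  finally have "m (m s2 s1) p \<le> sup p' (m x d)" .
  moreover have "sup p' (m x d) \<le> p"
    using p'(2) mult_mono[OF d(4), of x] mult_residual_le[of x p] unfolding r_def by simp
  moreover have "compact_el (sup p' (m x d))"
    using compact_el_sup[OF p'(1) compact_el_mult_principal[OF cg \<open>principal_el m x\<close> d(1)]] .
  moreover have "m s2 s1 \<in> S"
    using \<open>mult_closed m S\<close> c(2) d(2) unfolding mult_closed_def by blast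
  ultimately show ?thesis unfolding S_compact_def by blast
qed

lemma S_compact_of_S_element_le:
  assumes "mult_closed m S" "s \<in> S" "s \<le> p"
  shows "S_compact m S p"
  using assms mult_le_left_factor[of s p] unfolding S_compact_def mult_closed_def by blast

lemma S_compact_Sup_directed:
  assumes "directed D" "S_compact m S (Sup D)"
  shows "\<exists>d\<in>D. S_compact m S d"
proof -
  obtain b s where b: "compact_el b" "s \<in> S" "m s (Sup D) \<le> b" "b \<le> Sup D"
    using assms(2) unfolding S_compact_def by blast
  then obtain d where "d \<in> D" "b \<le> d"
    using compact_el_directedD[OF b(1) assms(1)] by blast
  moreover have "m s d \<le> b"
    using mult_mono[OF Sup_upper[OF \<open>d \<in> D\<close>], of s] b(3) by simp
  ultimately show ?thesis using b(1,2) unfolding S_compact_def by blast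
qed

lemma exists_maximal_not_S_compact:
  assumes "\<not> S_compact m S a"
  shows "\<exists>p. \<not> S_compact m S p \<and> (\<forall>y. p < y \<longrightarrow> S_compact m S y)"
proof -
  define A where "A = {a. \<not> S_compact m S a}"
  have "\<exists>p\<in>A. \<forall>y\<in>A. p \<le> y \<longrightarrow> y = p"
  proof (rule predicate_Zorn)
    show "partial_order_on A (relation_of (\<le>) A)"
      by (rule partial_order_on_relation_ofI) auto
    fix C assume C: "C \<in> Chains (relation_of (\<le>) A)"
    show "\<exists>u\<in>A. \<forall>c\<in>C. c \<le> u"
    proof (cases "C = {}")
      case True
      then show ?thesis using assms A_def by blast
    next
      case False
      with C have "directed C"
        unfolding directed_def Chains_def relation_of_def by auto
      then have "Sup C \<in> A"
        using S_compact_Sup_directed Chains_relation_of[OF C] unfolding A_def by blast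
      then show ?thesis by (blast intro: Sup_upper)
    qed
  qed
  then show ?thesis unfolding A_def by (auto simp: less_le)
qed

end

lemma maximal_not_S_compact_prime:
  assumes "r_lattice m" "mult_closed m S"
    and "\<not> S_compact m S p" "\<And>y. p < y \<Longrightarrow> S_compact m S y"
    and "m a b \<le> p"
  shows "a \<le> p \<or> b \<le> p"
proof (rule ccontr)
  assume "\<not> (a \<le> p \<or> b \<le> p)"
  then have "\<not> a \<le> p" "\<not> b \<le> p" by auto
  have ml: "mult_lattice m"
    and modular: "\<And>a b c::'a. a \<le> c \<Longrightarrow> sup a (inf b c) = inf (sup a b) c"
    and cg: "\<And>a::'a. \<exists>C. (\<forall>c\<in>C. compact_el c) \<and> a = Sup C"
    and pg: "\<And>a::'a. \<exists>P. (\<forall>x\<in>P. principal_el m x) \<and> a = Sup P"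
    using \<open>r_lattice m\<close> unfolding r_lattice_def by blast+
  obtain P where P: "\<forall>x\<in>P. principal_el m x" "a = Sup P" using pg by blast
  then obtain x where x: "x \<in> P" "\<not> x \<le> p"
    using \<open>\<not> a \<le> p\<close> by (metis Sup_least)
  have "p < sup p x"
    using x(2) by (metis less_le sup.cobounded1 sup.cobounded2)
  then have "S_compact m S (sup p x)" by (rule assms(4))
  moreover have "S_compact m S (residual m p x)"
  proof (rule assms(4))
    have "m x b \<le> p"
      using mult_mono_left[OF ml Sup_upper[OF x(1)], of b] P(2) assms(5) by simp
    then have "b \<le> residual m p x"
      by (intro le_residualI) (simp add: mult_commute[OF ml])
    moreover have "p \<le> residual m p x"
      by (intro le_residualI) (rule mult_le_left_factor[OF ml])
    ultimately show "p < residual m p x"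
      using \<open>\<not> b \<le> p\<close> by (auto simp: less_le)
  qed
  ultimately have "S_compact m S p"
    using S_compact_of_S_compact_sup_residual[OF ml modular cg assms(2)] P(1) x(1) by blast
  then show False using assms(3) by blast
qed

theorem mainTheorem3:
  fixes m :: "'a::complete_lattice \<Rightarrow> 'a \<Rightarrow> 'a" and S :: "'a set"
  assumes "r_lattice m" and "mult_closed m S" and "top \<in> S" and "bot \<notin> S"
  shows "S_noetherian m S \<longleftrightarrow> (\<forall>p. S_prime m S p \<longrightarrow> S_compact m S p)"
proof
  assume "S_noetherian m S"
  then show "\<forall>p. S_prime m S p \<longrightarrow> S_compact m S p" unfolding S_noetherian_def by blast
next
  assume primes: "\<forall>p. S_prime m S p \<longrightarrow> S_compact m S p"
  have ml: "mult_lattice m" using \<open>r_lattice m\<close> unfolding r_lattice_def by blast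
  show "S_noetherian m S"
    unfolding S_noetherian_def
  proof (rule ccontr)
    assume "\<not> (\<forall>a. S_compact m S a)"
    then obtain p where p: "\<not> S_compact m S p" "\<And>y. p < y \<Longrightarrow> S_compact m S y"
      using exists_maximal_not_S_compact[OF ml] by blast
    have "\<forall>t\<in>S. \<not> t \<le> p"
      using S_compact_of_S_element_le[OF ml \<open>mult_closed m S\<close>] p(1) by blast
    moreover have "\<forall>a b. m a b \<le> p \<longrightarrow> m top a \<le> p \<or> m top b \<le> p"
      using maximal_not_S_compact_prime[OF \<open>r_lattice m\<close> \<open>mult_closed m S\<close> p]
      by (simp add: mult_top_left[OF ml])
    ultimately have "S_prime m S p"
      using \<open>top \<in> S\<close> unfolding S_prime_def by blast
    then show False using primes p(1) by blast
  qed
qed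

end
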